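(* Let $R=\mathbb{R}[t]/(t^2)$ and let $A$ be the evolution algebra over $R$ with basis $\{x_i:i\in\mathbb{N}\}$ and multiplication determined by $x_ix_i=tx_i+x_{i+1}$ and $x_ix_j=0$ for $i\ne j$. Then $A$ is nil but not nilpotent.
   Context: An evolution algebra over a commutative ring $R$ is a free $R$-module with basis $\{x_i\}$ and $R$-bilinear multiplication determined by $x_ix_j=0$ for $i\ne j$ and $x_i^2=\sum_k c_{ki}x_k$. Principal powers: $a^1=a$, $a^n=a^{n-1}a$; $A^1=A$, $A^n=A^{n-1}A$ ($R$-span of products). $A$ is nil if every element has some principal power equal to $0$; nilpotent if $A^n=(0)$ for some $n$. *)

theory Defs
  imports Complex_Main
begin

section \<open>The ring R = real[t]/(t^2) (dual numbers a + b t)\<close>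

datatype dual = Dual (re: real) (ep: real)

instantiation dual :: comm_ring_1
begin
definition "zero_dual = Dual 0 0"
definition "one_dual = Dual 1 0"
definition "plus_dual x y = Dual (re x + re y) (ep x + ep y)"
definition "minus_dual x y = Dual (re x - re y) (ep x - ep y)"
definition "uminus_dual x = Dual (- re x) (- ep x)"
definition "times_dual x y = Dual (re x * re y) (re x * ep y + ep x * re y)"
instance
  by intro_classes
     (auto simp: zero_dual_def one_dual_def plus_dual_def minus_dual_def
                 uminus_dual_def times_dual_def dual.expand algebra_simps)
end

definition dual_t :: dual where "dual_t = Dual 0 1"

text \<open>Elements of the free module with basis indexed by nat: finitely supported
  coefficient functions; the element is \<Sum> a i x_i.\<close>
definition fsupp :: "(nat \<Rightarrow> 'r::comm_ring_1) set" where
  "fsupp = {a. finite {i. a i \<noteq> 0}}"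

text \<open>Structure constants: x_i^2 = \<Sum>_k c k i x_k, x_i x_j = 0 for i \<noteq> j.
  Bilinear extension: (\<Sum> a_i x_i)(\<Sum> b_j x_j) = \<Sum>_i a_i b_i x_i^2.\<close>
definition evo_mult :: "(nat \<Rightarrow> nat \<Rightarrow> 'r::comm_ring_1) \<Rightarrow> (nat \<Rightarrow> 'r) \<Rightarrow> (nat \<Rightarrow> 'r) \<Rightarrow> (nat \<Rightarrow> 'r)" where
  "evo_mult c a b = (\<lambda>k. \<Sum>i\<in>{i. a i \<noteq> 0}. a i * b i * c k i)"

text \<open>Principal powers a^1 = a, a^(n+1) = a^n a (index 0 unused).\<close>
fun ppow :: "(nat \<Rightarrow> nat \<Rightarrow> 'r::comm_ring_1) \<Rightarrow> (nat \<Rightarrow> 'r) \<Rightarrow> nat \<Rightarrow> (nat \<Rightarrow> 'r)" where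
  "ppow c a 0 = a"
| "ppow c a (Suc 0) = a"
| "ppow c a (Suc (Suc n)) = evo_mult c (ppow c a (Suc n)) a"

inductive_set rspan :: "(nat \<Rightarrow> 'r::comm_ring_1) set \<Rightarrow> (nat \<Rightarrow> 'r) set" for S where
  zero: "(\<lambda>_. 0) \<in> rspan S"
| base: "x \<in> S \<Longrightarrow> x \<in> rspan S"
| add: "x \<in> rspan S \<Longrightarrow> y \<in> rspan S \<Longrightarrow> (\<lambda>k. x k + y k) \<in> rspan S"
| smult: "x \<in> rspan S \<Longrightarrow> (\<lambda>k. r * x k) \<in> rspan S"

text \<open>Principal powers of the algebra: A^1 = A, A^(n+1) = span(A^n A) (index 0 unused).\<close>
fun apow :: "(nat \<Rightarrow> nat \<Rightarrow> 'r::comm_ring_1) \<Rightarrow> nat \<Rightarrow> (nat \<Rightarrow> 'r) set" where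
  "apow c 0 = fsupp"
| "apow c (Suc 0) = fsupp"
| "apow c (Suc (Suc n)) = rspan {evo_mult c u v | u v. u \<in> apow c (Suc n) \<and> v \<in> fsupp}"

definition evo_nil :: "(nat \<Rightarrow> nat \<Rightarrow> 'r::comm_ring_1) \<Rightarrow> bool" where
  "evo_nil c \<longleftrightarrow> (\<forall>a\<in>fsupp. \<exists>n\<ge>1. ppow c a n = (\<lambda>_. 0))"

definition evo_nilpotent :: "(nat \<Rightarrow> nat \<Rightarrow> 'r::comm_ring_1) \<Rightarrow> bool" where
  "evo_nilpotent c \<longleftrightarrow> (\<exists>n\<ge>1. apow c n = {\<lambda>_. 0})"

definition ex_c :: "nat \<Rightarrow> nat \<Rightarrow> dual" where
  "ex_c k i = (if k = i then dual_t else if k = Suc i then 1 else 0)"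

end

theory Submission
  imports Defs
begin

text \<open>In \<open>b a\<close> the \<open>k\<close>-th coefficient is \<open>b\<^sub>k a\<^sub>k t + b\<^sub>k\<^sub>-\<^sub>1 a\<^sub>k\<^sub>-\<^sub>1\<close>. Since \<open>t\<^sup>2 = 0\<close>, the
  diagonal term vanishes once \<open>b\<^sub>k\<close> is a multiple of \<open>t\<close>, so by induction the coefficients of
  \<open>a\<^sup>n\<^sup>+\<^sup>1\<close> below index \<open>n - 1\<close> vanish and those below \<open>n\<close> are multiples of \<open>t\<close>. As every power of
  \<open>a\<close> lives on the support of \<open>a\<close> and its shift, a high power of \<open>a\<close> is zero: \<open>A\<close> is nil.
  It is not nilpotent because \<open>x\<^sub>j\<^sup>2\<close> has coefficient \<open>1\<close> at \<open>x\<^sub>j\<^sub>+\<^sub>1\<close>: multiplying a nonzero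
  \<open>u \<in> A\<^sup>n\<close> by a basis vector \<open>x\<^sub>j\<close> with \<open>u\<^sub>j \<noteq> 0\<close> gives a nonzero element of \<open>A\<^sup>n\<^sup>+\<^sup>1\<close>.\<close>

definition shift_c :: "'r::comm_ring_1 \<Rightarrow> nat \<Rightarrow> nat \<Rightarrow> 'r" where
  "shift_c t k i = (if k = i then t else if k = Suc i then 1 else 0)"

definition basis_vec :: "nat \<Rightarrow> nat \<Rightarrow> 'r::comm_ring_1" where
  "basis_vec j = (\<lambda>i. if i = j then 1 else 0)"

lemma basis_vec_in_fsupp: "basis_vec j \<in> fsupp"
  by (auto simp: fsupp_def basis_vec_def intro: finite_subset[of _ "{j}"])

lemma basis_vec_nonzero: "basis_vec j \<noteq> (\<lambda>_. 0)"
  by (auto simp: basis_vec_def fun_eq_iff)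

lemma evo_mult_eq_sum:
  assumes "u \<in> fsupp" and "finite F" and "\<And>i. c k i \<noteq> 0 \<Longrightarrow> i \<in> F"
  shows "evo_mult c u v k = (\<Sum>i\<in>F. u i * v i * c k i)"
proof -
  let ?f = "\<lambda>i. u i * v i * c k i" and ?S = "{i. u i \<noteq> 0}"
  have fin: "finite (?S \<union> F)" using assms(1,2) by (simp add: fsupp_def)
  have outside: "c k i = 0" if "i \<notin> F" for i using assms(3) that by blast
  have "sum ?f ?S = sum ?f (?S \<union> F)"
    by (rule sum.mono_neutral_left) (use fin in auto)
  also have "\<dots> = sum ?f F"
    by (rule sum.mono_neutral_right) (use fin outside in auto)
  finally show ?thesis by (simp add: evo_mult_def)
qed

lemma evo_mult_basis_vec:
  assumes "u \<in> fsupp"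
  shows "evo_mult c u (basis_vec j) = (\<lambda>k. u j * c k j)"
proof
  fix k
  have "evo_mult c u (basis_vec j) k = (\<Sum>i\<in>{i. u i \<noteq> 0}. if i = j then u j * c k j else 0)"
    unfolding evo_mult_def basis_vec_def by (rule sum.cong) auto
  then show "evo_mult c u (basis_vec j) k = u j * c k j"
    using assms by (simp add: fsupp_def)
qed

lemma apow_nonzero:
  assumes finite_squares: "\<And>j. finite {k. c k j \<noteq> 0}"
    and unit_coeff: "\<And>j. \<exists>k. c k j = 1"
  shows "\<exists>u\<in>apow c (Suc n). u \<in> fsupp \<and> u \<noteq> (\<lambda>_. 0)"
proof (induction n)
  case 0
  have "basis_vec 0 \<in> apow c (Suc 0)" by (simp add: basis_vec_in_fsupp)
  then show ?case using basis_vec_in_fsupp basis_vec_nonzero by blast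
next
  case (Suc n)
  then obtain u where u: "u \<in> apow c (Suc n)" "u \<in> fsupp" "u \<noteq> (\<lambda>_. 0)"
    by blast
  then obtain j where "u j \<noteq> 0" by (auto simp: fun_eq_iff)
  obtain k where "c k j = 1" using unit_coeff by blast
  define w where "w = evo_mult c u (basis_vec j)"
  have w: "w = (\<lambda>k. u j * c k j)"
    unfolding w_def using u(2) by (rule evo_mult_basis_vec)
  have "w k \<noteq> 0" using \<open>c k j = 1\<close> \<open>u j \<noteq> 0\<close> by (simp add: w)
  then have "w \<noteq> (\<lambda>_. 0)" by auto
  moreover have "w \<in> fsupp"
    unfolding fsupp_def w by (rule CollectI, rule finite_subset[OF _ finite_squares[of j]]) auto
  moreover have "w \<in> apow c (Suc (Suc n))"
    unfolding apow.simps w_def using u(1) basis_vec_in_fsupp by (blast intro: rspan.base)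
  ultimately show ?case by blast
qed

lemma ppow_in_fsupp:
  assumes "\<And>u v. u \<in> fsupp \<Longrightarrow> evo_mult c u v \<in> fsupp" and "a \<in> fsupp"
  shows "ppow c a n \<in> fsupp"
proof -
  have "ppow c a (Suc m) \<in> fsupp" for m by (induction m) (use assms in auto)
  then show ?thesis using assms(2) by (cases n) auto
qed

lemma not_evo_nilpotent:
  assumes "\<And>j. finite {k. c k j \<noteq> 0}" and "\<And>j. \<exists>k. c k j = 1"
  shows "\<not> evo_nilpotent c"
proof
  assume "evo_nilpotent c"
  then obtain n where "apow c (Suc n) = {\<lambda>_. 0}"
    by (auto simp: evo_nilpotent_def dest!: Suc_le_D)
  then show False using apow_nonzero[of c, OF assms, of n] by auto
qed

lemma evo_mult_shift_c_0:
  "u \<in> fsupp \<Longrightarrow> evo_mult (shift_c t) u v 0 = u 0 * v 0 * t"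
  by (subst evo_mult_eq_sum[where F = "{0}"]) (auto simp: shift_c_def split: if_splits)

lemma evo_mult_shift_c_Suc:
  "u \<in> fsupp \<Longrightarrow> evo_mult (shift_c t) u v (Suc k) = u (Suc k) * v (Suc k) * t + u k * v k"
  by (subst evo_mult_eq_sum[where F = "{k, Suc k}"]) (auto simp: shift_c_def split: if_splits)

lemma evo_mult_shift_c_in_fsupp:
  assumes "u \<in> fsupp"
  shows "evo_mult (shift_c t) u v \<in> fsupp"
proof -
  let ?S = "{i. u i \<noteq> 0}"
  have "{k. evo_mult (shift_c t) u v k \<noteq> 0} \<subseteq> ?S \<union> Suc ` ?S"
  proof
    fix k assume "k \<in> {k. evo_mult (shift_c t) u v k \<noteq> 0}"
    then show "k \<in> ?S \<union> Suc ` ?S"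
      using assms by (cases k) (auto simp: evo_mult_shift_c_0 evo_mult_shift_c_Suc)
  qed
  then show ?thesis using assms by (auto simp: fsupp_def intro: finite_subset)
qed

lemma ppow_shift_c_in_fsupp: "a \<in> fsupp \<Longrightarrow> ppow (shift_c t) a n \<in> fsupp"
  by (rule ppow_in_fsupp) (rule evo_mult_shift_c_in_fsupp)

lemma evo_mult_shift_c_vanishes_high:
  assumes "u \<in> fsupp" and "\<And>i. q < i \<Longrightarrow> v i = 0" and "Suc q < k"
  shows "evo_mult (shift_c t) u v k = 0"
  using assms by (cases k) (auto simp: evo_mult_shift_c_Suc)

lemma ppow_shift_c_low_coeffs:
  fixes t :: "'r::comm_ring_1"
  assumes "t * t = 0" and a: "a \<in> fsupp"
  shows "(\<forall>k. k + 1 < n \<longrightarrow> ppow (shift_c t) a (Suc n) k = 0) \<and>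
         (\<forall>k < n. t dvd ppow (shift_c t) a (Suc n) k)"
proof (induction n)
  case 0
  show ?case by simp
next
  case (Suc n)
  define b where "b = ppow (shift_c t) a (Suc n)"
  have b: "b \<in> fsupp" unfolding b_def using a by (rule ppow_shift_c_in_fsupp)
  have low: "\<And>k. k + 1 < n \<Longrightarrow> b k = 0" and dvd: "\<And>k. k < n \<Longrightarrow> t dvd b k"
    using Suc.IH by (auto simp: b_def)
  have diag: "b k * a k * t = 0" if k_less: "k < n" for k
  proof -
    obtain r where "b k = t * r" using dvd[OF k_less] by (rule dvdE)
    then have "b k * a k * t = (t * t) * (r * a k)" by (simp add: ac_simps)
    then show ?thesis using \<open>t * t = 0\<close> by simp
  qed
  have power: "ppow (shift_c t) a (Suc (Suc n)) = evo_mult (shift_c t) b a"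
    by (simp add: b_def)
  show ?case
  proof (intro conjI allI impI)
    fix k assume "k + 1 < Suc n"
    then show "ppow (shift_c t) a (Suc (Suc n)) k = 0"
      unfolding power using b diag low
      by (cases k) (auto simp: evo_mult_shift_c_0 evo_mult_shift_c_Suc)
  next
    fix k assume "k < Suc n"
    then show "t dvd ppow (shift_c t) a (Suc (Suc n)) k"
      unfolding power using b dvd
      by (cases k) (auto simp: evo_mult_shift_c_0 evo_mult_shift_c_Suc)
  qed
qed

lemma evo_nil_shift_c:
  fixes t :: "'r::comm_ring_1"
  assumes "t * t = 0"
  shows "evo_nil (shift_c t)"
  unfolding evo_nil_def
proof
  fix a :: "nat \<Rightarrow> 'r" assume a: "a \<in> fsupp"
  define q where "q = Max (insert 0 {i. a i \<noteq> 0})"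
  have high: "a i = 0" if "q < i" for i
    using a that Max_ge[of "insert 0 {i. a i \<noteq> 0}" i] by (force simp: q_def fsupp_def)
  let ?N = "Suc (Suc (Suc q))"
  have "ppow (shift_c t) a (Suc ?N) k = 0" for k
  proof (cases "Suc q < k")
    case True
    have "ppow (shift_c t) a ?N \<in> fsupp" using a by (rule ppow_shift_c_in_fsupp)
    then have "evo_mult (shift_c t) (ppow (shift_c t) a ?N) a k = 0"
      using high True by (rule evo_mult_shift_c_vanishes_high)
    then show ?thesis by simp
  next
    case False
    then show ?thesis using ppow_shift_c_low_coeffs[OF assms a, of ?N] by simp
  qed
  then show "\<exists>n\<ge>1. ppow (shift_c t) a n = (\<lambda>_. 0)"
    by (intro exI[of _ "Suc ?N"]) auto
qed

lemma not_evo_nilpotent_shift_c: "\<not> evo_nilpotent (shift_c t)"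
proof (rule not_evo_nilpotent)
  show "finite {k. shift_c t k j \<noteq> 0}" for j
    by (rule finite_subset[of _ "{j, Suc j}"]) (auto simp: shift_c_def)
  show "\<exists>k. shift_c t k j = 1" for j
    by (intro exI[of _ "Suc j"]) (simp add: shift_c_def)
qed

lemma ex_c_eq_shift_c: "ex_c = shift_c dual_t"
  by (auto simp: ex_c_def shift_c_def fun_eq_iff)

lemma dual_t_mult_self: "dual_t * dual_t = 0"
  by (simp add: dual_t_def times_dual_def zero_dual_def)

theorem mainTheorem10:
  shows "evo_nil ex_c \<and> \<not> evo_nilpotent ex_c"
  unfolding ex_c_eq_shift_c
  using evo_nil_shift_c[OF dual_t_mult_self] not_evo_nilpotent_shift_c by blast

end
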